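(* Let $X\in\mathbb R^{n\times p}$ be fixed and let $\mathbf y\in\mathbb R^n$ be a random vector with independent components satisfying, for some $\sigma\ge0$, $\mathbb E\,e^{t(\mathbf y_i-\mathbb E\mathbf y_i)}\le e^{\sigma^2t^2/2}$ for all $i$ and $t\in\mathbb R$; let $\hat Q(\beta)=\|X\beta-\mathbf y\|_2^2$. Let $\mathrm{cl}$ be a coding length with coding complexity $c(\cdot)$. Fix a target $\bar\beta\in\mathbb R^p$ and $\eta\in(0,1)$. Then with probability exceeding $1-\eta$, for all $\lambda\ge0$, $\epsilon\ge0$ and $\hat\beta\in\mathbb R^p$ such that $\hat Q(\hat\beta)+\lambda c(\hat\beta)\le\hat Q(\bar\beta)+\lambda c(\bar\beta)+\epsilon$, and for all $a>0$, \[ \|X\hat\beta-\mathbb E\mathbf y\|_2^2\le(1+a)\left[\|X\bar\beta-\mathbb E\mathbf y\|_2^2+2\sigma\sqrt{2\ln(6/\eta)}\|X\bar\beta-\mathbb E\mathbf y\|_2\right]+(1+a)\lambda c(\bar\beta)+a'c(\hat\beta)+b'\ln(6/\eta)+(1+a)\epsilon, \] where $a'=7.4(2+a+a^{-1})\sigma^2-(1+a)\lambda$ and $b'=4.7\sigma^2(2+a+a^{-1})$. Moreover, if the coding complexity $c(\cdot)$ is sub-additive, then \[ n\,\rho_-(c(\hat\beta)+c(\bar\beta))\|\hat\beta-\bar\beta\|_2^2\le10\|X\bar\beta-\mathbb E\mathbf y\|_2^2+2.5\lambda c(\bar\beta)+(37\sigma^2-2.5\lambda)c(\hat\beta)+29\sigma^2\ln(6/\eta)+2.5\epsilon.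 \]
   Context: Let $\mathcal I=\{1,\ldots,p\}$ and $\mathrm{supp}(\beta)=\{j:\beta_j\ne0\}$. A function $\mathrm{cl}$ from subsets of $\mathcal I$ to $[0,\infty]$ is a coding length if $\sum_{F\subset\mathcal I,\,F\ne\emptyset}2^{-\mathrm{cl}(F)}\le1$, with $\mathrm{cl}(\emptyset)=0$. The coding complexity is $c(F)=|F|+\mathrm{cl}(F)$ for $F\subset\mathcal I$, and $c(\beta)=\min\{c(F):\mathrm{supp}(\beta)\subset F\}$ for $\beta\in\mathbb R^p$; it is sub-additive if $c(F\cup F')\le c(F)+c(F')$ for all $F,F'\subset\mathcal I$. For $F\subset\mathcal I$, $\rho_-(F)=\inf\{\frac1n\|X\beta\|_2^2/\|\beta\|_2^2:\beta\ne0,\ \mathrm{supp}(\beta)\subset F\}$, and for $s>0$, $\rho_-(s)=\inf\{\rho_-(F):c(F)\le s\}$. *)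

theory Defs
  imports "HOL-Probability.Probability"
begin

text \<open>Index set I is the finite type 'p (so p = CARD('p)); vectors in R^p are real^'p,
  the design matrix X is real^'p^'n (n x p), observations are real^'n.\<close>

definition supp :: "real^'p \<Rightarrow> 'p set" where
  "supp \<beta> = {j. \<beta> $ j \<noteq> 0}"

definition pow2neg :: "ereal \<Rightarrow> real" where
  "pow2neg x = (case x of ereal r \<Rightarrow> 2 powr (- r) | _ \<Rightarrow> 0)"

definition coding_length :: "('p::finite set \<Rightarrow> ereal) \<Rightarrow> bool" where
  "coding_length cl \<longleftrightarrow> cl {} = 0 \<and> (\<forall>F. 0 \<le> cl F) \<and>
     (\<Sum>F \<in> Pow UNIV - {{}}. pow2neg (cl F)) \<le> 1"

definition cc_set :: "('p::finite set \<Rightarrow> ereal) \<Rightarrow> 'p set \<Rightarrow> ereal" where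
  "cc_set cl F = ereal (real (card F)) + cl F"

definition cc :: "('p::finite set \<Rightarrow> ereal) \<Rightarrow> real^'p \<Rightarrow> ereal" where
  "cc cl \<beta> = (INF F \<in> {F. supp \<beta> \<subseteq> F}. cc_set cl F)"

definition subadditive_cc :: "('p::finite set \<Rightarrow> ereal) \<Rightarrow> bool" where
  "subadditive_cc cl \<longleftrightarrow> (\<forall>F F'. cc_set cl (F \<union> F') \<le> cc_set cl F + cc_set cl F')"

text \<open>\<rho>_-(F); the infimum of the empty set is +\<infinity>.\<close>
definition rho_set :: "real^'p^'n \<Rightarrow> 'p set \<Rightarrow> ereal" where
  "rho_set X F = (INF \<beta> \<in> {\<beta>. \<beta> \<noteq> 0 \<and> supp \<beta> \<subseteq> F}.
      ereal ((1 / real CARD('n)) * (norm (X *v \<beta>))^2 / (norm \<beta>)^2))"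

definition rho_minus :: "real^'p^'n \<Rightarrow> ('p set \<Rightarrow> ereal) \<Rightarrow> ereal \<Rightarrow> ereal" where
  "rho_minus X cl s = (INF F \<in> {F. cc_set cl F \<le> s}. rho_set X F)"

end

theory Submission
  imports Defs
begin

text \<open>
  Write \<open>\<xi> = y - E y\<close>.  Outside an event of probability at most \<open>\<eta>\<close> two deviation bounds hold:
  \<open>\<langle>\<xi>, E y - X bb\<rangle> \<le> \<sigma> sqrt (2 ln (6/\<eta>)) \<parallel>X bb - E y\<parallel>\<close> for the target \<open>bb\<close>, and, for every
  \<open>F\<close> of finite code length, \<open>\<langle>\<xi>, w\<rangle> \<le> \<parallel>w\<parallel> \<sigma> sqrt (7.4 c(F) + 4.7 ln (6/\<eta>))\<close> uniformly over
  \<open>w\<close> in the span of \<open>E y\<close> and the columns \<open>X_F\<close>.  The first is a Chernoff bound.  For the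
  second, \<open>\<langle>\<xi>, w\<rangle>/\<parallel>w\<parallel>\<close> is at most the norm of the projection of \<open>\<xi>\<close> onto a subspace of dimension
  at most \<open>|F| + 1\<close>; writing \<open>exp (s\<^sup>2/2) = E exp (s g)\<close> for a standard Gaussian \<open>g\<close> shows that the
  squared projection has exponential moment at most \<open>sqrt 2 ^ dim\<close> at parameter \<open>1/(4\<sigma>\<^sup>2)\<close>, and the
  union bound over all \<open>F\<close> costs the Kraft sum \<open>\<Sum> 2^(-cl F) \<le> 1\<close>.

  On that event the optimality of \<open>bh\<close> expands around \<open>E y\<close> to
  \<open>\<parallel>u\<parallel>\<^sup>2 \<le> \<parallel>v\<parallel>\<^sup>2 + 2\<langle>\<xi>,u\<rangle> - 2\<langle>\<xi>,v\<rangle> + \<lambda>(c(bb) - c(bh)) + \<epsilon>\<close> with \<open>u = X bh - E y\<close>, \<open>v = X bb - E y\<close>;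
  bounding \<open>\<langle>\<xi>,v\<rangle>\<close> by the first deviation bound, \<open>\<langle>\<xi>,u\<rangle> \<le> \<parallel>u\<parallel>K\<close> by the second (for a set \<open>F\<close>
  realising \<open>c(bh)\<close>) and \<open>2\<parallel>u\<parallel>K \<le> a/(1+a) \<parallel>u\<parallel>\<^sup>2 + (1+a)/a K\<^sup>2\<close> gives the first inequality.  The second follows
  from the case \<open>a = 1\<close>, the triangle inequality for \<open>X (bh - bb) = u - v\<close> and the definition of
  \<open>\<rho>_-\<close>, since by sub-additivity \<open>supp (bh - bb)\<close> lies in a set of complexity at most \<open>c(bh) + c(bb)\<close>.
\<close>

section \<open>Sub-Gaussian random vectors\<close>

definition subgaussian_vector :: "'a measure \<Rightarrow> ('a \<Rightarrow> 'b::real_inner) \<Rightarrow> 'b \<Rightarrow> real \<Rightarrow> bool" where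
  "subgaussian_vector M Z \<mu> \<sigma> \<longleftrightarrow>
     (\<forall>w. (\<integral>\<^sup>+\<omega>. ennreal (exp (w \<bullet> (Z \<omega> - \<mu>))) \<partial>M) \<le> ennreal (exp (\<sigma>\<^sup>2 * (norm w)\<^sup>2 / 2)))"

lemma norm_vec_sq_eq_sum: "(norm (w::real^'n))\<^sup>2 = (\<Sum>i\<in>UNIV. (w$i)\<^sup>2)"
  unfolding power2_norm_eq_inner inner_vec_def by (simp add: power2_eq_square)

lemma subgaussian_vector_indep_components:
  fixes M :: "'a measure" and Y :: "'a \<Rightarrow> real^'n"
  assumes P: "prob_space M"
    and indep: "prob_space.indep_vars M (\<lambda>_. borel) (\<lambda>i \<omega>. Y \<omega> $ i) UNIV"
    and mgf_integ: "\<And>i t. integrable M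
          (\<lambda>\<omega>. exp (t * (Y \<omega> $ i - prob_space.expectation M (\<lambda>\<omega>. Y \<omega> $ i))))"
    and subgauss: "\<And>i t. prob_space.expectation M
          (\<lambda>\<omega>. exp (t * (Y \<omega> $ i - prob_space.expectation M (\<lambda>\<omega>. Y \<omega> $ i))))
          \<le> exp (\<sigma>\<^sup>2 * t\<^sup>2 / 2)"
  shows "subgaussian_vector M Y (\<chi> i. prob_space.expectation M (\<lambda>\<omega>. Y \<omega> $ i)) \<sigma>"
  unfolding subgaussian_vector_def
proof
  interpret prob_space M by (rule P)
  fix w :: "real^'n"
  define EY :: "real^'n" where "EY = (\<chi> i. expectation (\<lambda>\<omega>. Y \<omega> $ i))"
  have "(\<integral>\<^sup>+\<omega>. ennreal (exp (w \<bullet> (Y \<omega> - EY))) \<partial>M)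
      = (\<integral>\<^sup>+\<omega>. (\<Prod>i\<in>UNIV. ennreal (exp (w$i * (Y \<omega> $ i - EY $ i)))) \<partial>M)"
    by (intro nn_integral_cong) (simp add: inner_vec_def exp_sum prod_ennreal)
  also have "\<dots> = (\<Prod>i\<in>UNIV. \<integral>\<^sup>+\<omega>. ennreal (exp (w$i * (Y \<omega> $ i - EY $ i))) \<partial>M)"
    by (intro indep_vars_nn_integral indep_vars_compose2[OF indep]) auto
  also have "\<dots> \<le> (\<Prod>i\<in>UNIV. ennreal (exp (\<sigma>\<^sup>2 * (w$i)\<^sup>2 / 2)))"
  proof (intro prod_mono_ennreal)
    fix i
    have "(\<integral>\<^sup>+\<omega>. ennreal (exp (w$i * (Y \<omega> $ i - EY $ i))) \<partial>M)
        = ennreal (expectation (\<lambda>\<omega>. exp (w$i * (Y \<omega> $ i - expectation (\<lambda>\<omega>. Y \<omega> $ i)))))"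
      using mgf_integ[of "w$i" i] by (subst nn_integral_eq_integral) (auto simp: EY_def)
    also have "\<dots> \<le> ennreal (exp (\<sigma>\<^sup>2 * (w$i)\<^sup>2 / 2))"
      using subgauss[of "w$i" i] by (intro ennreal_leI)
    finally show "(\<integral>\<^sup>+\<omega>. ennreal (exp (w$i * (Y \<omega> $ i - EY $ i))) \<partial>M)
        \<le> ennreal (exp (\<sigma>\<^sup>2 * (w$i)\<^sup>2 / 2))" .
  qed
  also have "\<dots> = ennreal (exp (\<sigma>\<^sup>2 * (norm w)\<^sup>2 / 2))"
    by (simp add: prod_ennreal exp_sum[symmetric] norm_vec_sq_eq_sum sum_distrib_left
        sum_divide_distrib)
  finally show "(\<integral>\<^sup>+\<omega>. ennreal (exp (w \<bullet> (Y \<omega> - EY))) \<partial>M) \<le> ennreal (exp (\<sigma>\<^sup>2 * (norm w)\<^sup>2 / 2))" .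
qed

lemma subgaussian_zero_AE_eq_expectation:
  fixes M :: "'a measure" and Z :: "'a \<Rightarrow> real"
  assumes P: "prob_space M"
    and integ: "\<And>t. integrable M (\<lambda>\<omega>. exp (t * (Z \<omega> - prob_space.expectation M Z)))"
    and mgf: "\<And>t. prob_space.expectation M (\<lambda>\<omega>. exp (t * (Z \<omega> - prob_space.expectation M Z))) \<le> 1"
  shows "AE \<omega> in M. Z \<omega> = prob_space.expectation M Z"
proof -
  interpret prob_space M by (rule P)
  define m where "m = expectation Z"
  define f where "f \<omega> = exp (Z \<omega> - m) + exp (- (Z \<omega> - m)) - 2" for \<omega>
  have f_square: "f \<omega> = (exp ((Z \<omega> - m) / 2) - exp (- (Z \<omega> - m) / 2))\<^sup>2" for \<omega>
  proof -
    have "exp (x/2) * exp (x/2) = exp x" "exp (x/2) * exp (-x/2) = 1"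
      "exp (-x/2) * exp (-x/2) = exp (-x)" for x :: real
      by (simp_all flip: exp_add)
    from this[of "Z \<omega> - m"] show ?thesis unfolding f_def power2_eq_square by (simp add: algebra_simps)
  qed
  have f_integ: "integrable M f"
    unfolding f_def m_def using integ[of 1] integ[of "-1"] by auto
  have "integral\<^sup>L M f = expectation (\<lambda>\<omega>. exp (1 * (Z \<omega> - m)))
      + expectation (\<lambda>\<omega>. exp ((-1) * (Z \<omega> - m))) - 2"
    unfolding f_def m_def using integ[of 1] integ[of "-1"] by (simp add: prob_space)
  also have "\<dots> \<le> 0" using mgf[of 1] mgf[of "-1"] by (simp add: m_def)
  moreover have "integral\<^sup>L M f \<ge> 0" by (rule Bochner_Integration.integral_nonneg) (simp add: f_square)
  ultimately have "integral\<^sup>L M f = 0" by linarith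
  then have "AE \<omega> in M. f \<omega> = 0"
    using integral_nonneg_eq_0_iff_AE[OF f_integ] by (simp add: f_square)
  then show ?thesis
    by eventually_elim (simp add: f_square m_def)
qed

lemma inner_centered_measurable [measurable]:
  fixes Y :: "'a \<Rightarrow> real^'n"
  assumes "\<And>i. (\<lambda>\<omega>. Y \<omega> $ i) \<in> borel_measurable M"
  shows "(\<lambda>\<omega>. w \<bullet> (Y \<omega> - c)) \<in> borel_measurable M"
proof -
  have "(\<lambda>\<omega>. w \<bullet> (Y \<omega> - c)) = (\<lambda>\<omega>. \<Sum>i\<in>UNIV. w$i * (Y \<omega> $ i - c$i))"
    by (simp add: inner_vec_def)
  also have "\<dots> \<in> borel_measurable M" using assms by measurable
  finally show ?thesis .
qed

lemma subgaussian_inner_tail: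
  fixes Y :: "'a \<Rightarrow> real^'n"
  assumes P: "prob_space M"
    and meas: "\<And>i. (\<lambda>\<omega>. Y \<omega> $ i) \<in> borel_measurable M"
    and sg: "subgaussian_vector M Y \<mu> \<sigma>" and "\<sigma> > 0" and "L \<ge> 0"
  shows "measure M {\<omega>\<in>space M. w \<bullet> (Y \<omega> - \<mu>) > \<sigma> * sqrt (2 * L) * norm w} \<le> exp (- L)"
proof (cases "w = 0 \<or> L = 0")
  case True
  interpret prob_space M by (rule P)
  show ?thesis using True by auto
next
  case False
  interpret prob_space M by (rule P)
  have w: "norm w > 0" and L: "L > 0" using False \<open>L \<ge> 0\<close> by auto
  define t where "t = \<sigma> * sqrt (2 * L) * norm w"
  define s where "s = t / (\<sigma>\<^sup>2 * (norm w)\<^sup>2)"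
  have "s > 0" using w L \<open>\<sigma> > 0\<close> by (simp add: s_def t_def)
  note [measurable] = inner_centered_measurable[OF meas]
  have "emeasure M {\<omega>\<in>space M. w \<bullet> (Y \<omega> - \<mu>) > t} \<le> emeasure M {\<omega>\<in>space M. w \<bullet> (Y \<omega> - \<mu>) \<ge> t}"
    by (intro emeasure_mono) auto
  also have "\<dots> \<le> ennreal (exp (-s * t))
      * (\<integral>\<^sup>+\<omega>. ennreal (exp (s * (w \<bullet> (Y \<omega> - \<mu>)))) * indicator (space M) \<omega> \<partial>M)"
    by (rule Chernoff_ineq_nn_integral_ge[OF \<open>s > 0\<close>]) auto
  also have "(\<integral>\<^sup>+\<omega>. ennreal (exp (s * (w \<bullet> (Y \<omega> - \<mu>)))) * indicator (space M) \<omega> \<partial>M)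
      = (\<integral>\<^sup>+\<omega>. ennreal (exp ((s *\<^sub>R w) \<bullet> (Y \<omega> - \<mu>))) \<partial>M)"
    by (intro nn_integral_cong) auto
  also have "ennreal (exp (-s * t)) * \<dots>
      \<le> ennreal (exp (-s * t)) * ennreal (exp (\<sigma>\<^sup>2 * (norm (s *\<^sub>R w))\<^sup>2 / 2))"
    using sg[unfolded subgaussian_vector_def, rule_format, of "s *\<^sub>R w"] by (intro mult_left_mono) auto
  also have "\<dots> = ennreal (exp (-s * t + \<sigma>\<^sup>2 * (norm (s *\<^sub>R w))\<^sup>2 / 2))"
    by (simp add: ennreal_mult[symmetric] exp_add[symmetric])
  also have "-s * t + \<sigma>\<^sup>2 * (norm (s *\<^sub>R w))\<^sup>2 / 2 = - L"
    using \<open>\<sigma> > 0\<close> w L unfolding s_def t_def by (simp add: power2_eq_square field_simps)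
  finally show ?thesis unfolding t_def by (simp add: emeasure_eq_measure)
qed

section \<open>Quadratic forms of sub-Gaussian vectors\<close>

abbreviation std_normal :: "real measure" where
  "std_normal \<equiv> density lborel (\<lambda>x. ennreal (std_normal_density x))"

lemma nn_integral_normal_density: "s > 0 \<Longrightarrow> (\<integral>\<^sup>+x. ennreal (normal_density m s x) \<partial>lborel) = 1"
  by (subst nn_integral_eq_integral) auto

lemma std_normal_exp_linear: "(\<integral>\<^sup>+x. ennreal (exp (a * x)) \<partial>std_normal) = ennreal (exp (a\<^sup>2 / 2))"
proof -
  have "std_normal_density x * exp (a * x) = exp (a\<^sup>2 / 2) * normal_density a 1 x" for x
    unfolding normal_density_def
    by (simp add: mult_exp_exp power2_eq_square algebra_simps diff_divide_distrib add_divide_distrib)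
  then have "(\<integral>\<^sup>+x. ennreal (exp (a * x)) \<partial>std_normal)
      = (\<integral>\<^sup>+x. ennreal (exp (a\<^sup>2 / 2)) * ennreal (normal_density a 1 x) \<partial>lborel)"
    by (subst nn_integral_density) (auto simp: ennreal_mult[symmetric])
  also have "\<dots> = ennreal (exp (a\<^sup>2 / 2))"
    by (simp add: nn_integral_cmult nn_integral_normal_density del: ennreal_mult)
  finally show ?thesis .
qed

lemma std_normal_exp_square_quarter: "(\<integral>\<^sup>+x. ennreal (exp (x\<^sup>2 / 4)) \<partial>std_normal) = ennreal (sqrt 2)"
proof -
  have "std_normal_density x * exp (x\<^sup>2 / 4) = sqrt 2 * normal_density 0 (sqrt 2) x" for x
    unfolding normal_density_def
    by (simp add: mult_exp_exp real_sqrt_mult power2_eq_square field_simps)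
  then have "(\<integral>\<^sup>+x. ennreal (exp (x\<^sup>2 / 4)) \<partial>std_normal)
      = (\<integral>\<^sup>+x. ennreal (sqrt 2) * ennreal (normal_density 0 (sqrt 2) x) \<partial>lborel)"
    by (subst nn_integral_density) (auto simp: ennreal_mult[symmetric])
  also have "\<dots> = ennreal (sqrt 2)"
    by (simp add: nn_integral_cmult nn_integral_normal_density del: ennreal_mult)
  finally show ?thesis .
qed

lemma prob_space_std_normal: "prob_space std_normal"
  by (rule prob_space_normal_density) simp

lemma PiM_std_normal_exp_linear:
  assumes "finite B"
  shows "(\<integral>\<^sup>+g. ennreal (exp (\<Sum>b\<in>B. x b * g b)) \<partial>PiM B (\<lambda>_. std_normal))
       = ennreal (exp ((\<Sum>b\<in>B. (x b)\<^sup>2) / 2))"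
proof -
  interpret product_prob_space "\<lambda>_. std_normal" B
    by (rule product_prob_spaceI) (rule prob_space_std_normal)
  have "(\<integral>\<^sup>+g. ennreal (exp (\<Sum>b\<in>B. x b * g b)) \<partial>PiM B (\<lambda>_. std_normal))
      = (\<integral>\<^sup>+g. (\<Prod>b\<in>B. ennreal (exp (x b * g b))) \<partial>PiM B (\<lambda>_. std_normal))"
    by (intro nn_integral_cong) (simp add: exp_sum assms prod_ennreal)
  also have "\<dots> = (\<Prod>b\<in>B. \<integral>\<^sup>+t. ennreal (exp (x b * t)) \<partial>std_normal)"
    by (rule product_nn_integral_prod) (auto simp: assms)
  also have "\<dots> = ennreal (exp ((\<Sum>b\<in>B. (x b)\<^sup>2) / 2))"
    by (simp add: std_normal_exp_linear prod_ennreal exp_sum[OF assms, symmetric] sum_divide_distrib)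
  finally show ?thesis .
qed

lemma PiM_std_normal_exp_square_quarter:
  assumes "finite B"
  shows "(\<integral>\<^sup>+g. ennreal (exp ((\<Sum>b\<in>B. (g b)\<^sup>2) / 4)) \<partial>PiM B (\<lambda>_. std_normal))
       = ennreal (sqrt 2 ^ card B)"
proof -
  interpret product_prob_space "\<lambda>_. std_normal" B
    by (rule product_prob_spaceI) (rule prob_space_std_normal)
  have "(\<integral>\<^sup>+g. ennreal (exp ((\<Sum>b\<in>B. (g b)\<^sup>2) / 4)) \<partial>PiM B (\<lambda>_. std_normal))
      = (\<integral>\<^sup>+g. (\<Prod>b\<in>B. ennreal (exp ((g b)\<^sup>2 / 4))) \<partial>PiM B (\<lambda>_. std_normal))"
    by (intro nn_integral_cong) (simp add: exp_sum assms prod_ennreal sum_divide_distrib)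
  also have "\<dots> = (\<Prod>b\<in>B. \<integral>\<^sup>+t. ennreal (exp (t\<^sup>2 / 4)) \<partial>std_normal)"
    by (rule product_nn_integral_prod) (auto simp: assms)
  also have "\<dots> = ennreal (sqrt 2 ^ card B)"
    by (simp add: std_normal_exp_square_quarter prod_ennreal ennreal_power)
  finally show ?thesis .
qed

lemma orthonormal_inner_eq:
  assumes "pairwise orthogonal B" "\<And>b. b \<in> B \<Longrightarrow> norm b = 1" "b \<in> B" "b' \<in> B"
  shows "b \<bullet> b' = (if b' = b then 1 else 0)"
  using assms unfolding pairwise_def orthogonal_def by (auto simp: power2_norm_eq_inner[symmetric])

lemma norm_sum_orthonormal_sq:
  fixes B :: "'a::real_inner set"
  assumes "finite B" "pairwise orthogonal B" "\<And>b. b \<in> B \<Longrightarrow> norm b = 1"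
  shows "(norm (\<Sum>b\<in>B. g b *\<^sub>R b))\<^sup>2 = (\<Sum>b\<in>B. (g b)\<^sup>2)"
proof -
  have "(norm (\<Sum>b\<in>B. g b *\<^sub>R b))\<^sup>2 = (\<Sum>b\<in>B. \<Sum>b'\<in>B. g b * g b' * (b \<bullet> b'))"
    unfolding power2_norm_eq_inner
    by (simp add: inner_sum_left inner_sum_right sum_distrib_left mult.assoc inner_commute
        mult.left_commute)
  also have "\<dots> = (\<Sum>b\<in>B. \<Sum>b'\<in>B. (if b' = b then g b * g b' else 0))"
    by (intro sum.cong refl) (simp add: orthonormal_inner_eq[OF assms(2,3)])
  also have "\<dots> = (\<Sum>b\<in>B. (g b)\<^sup>2)"
    using assms(1) by (simp add: power2_eq_square)
  finally show ?thesis .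
qed

lemma inner_le_norm_mult_projection:
  fixes B :: "'a::real_inner set"
  assumes B: "finite B" "pairwise orthogonal B" "\<And>b. b \<in> B \<Longrightarrow> norm b = 1"
    and w: "w \<in> span B"
  shows "x \<bullet> w \<le> norm w * sqrt (\<Sum>b\<in>B. (b \<bullet> x)\<^sup>2)"
proof -
  define z where "z = (\<Sum>b\<in>B. (b \<bullet> x) *\<^sub>R b)"
  have "orthogonal (x - z) y" if y: "y \<in> B" for y
  proof -
    have "z \<bullet> y = (\<Sum>b\<in>B. if b = y then b \<bullet> x else 0)"
      unfolding z_def inner_sum_left
      by (intro sum.cong refl) (simp add: orthonormal_inner_eq[OF B(2,3) _ y])
    then show ?thesis
      using B(1) y unfolding orthogonal_def by (simp add: inner_diff_left inner_diff_right inner_commute)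
  qed
  then have "orthogonal (x - z) w" by (intro orthogonal_to_span[OF w])
  then have "x \<bullet> w = z \<bullet> w" unfolding orthogonal_def by (simp add: inner_diff_left)
  also have "\<dots> \<le> norm z * norm w" by (rule norm_cauchy_schwarz)
  also have "norm z = sqrt (\<Sum>b\<in>B. (b \<bullet> x)\<^sup>2)"
    using norm_sum_orthonormal_sq[OF B, of "\<lambda>b. b \<bullet> x"] unfolding z_def
    by (metis norm_ge_zero real_sqrt_unique)
  finally show ?thesis by (simp add: mult.commute)
qed

lemma subgaussian_quadratic_mgf:
  fixes Y :: "'a \<Rightarrow> real^'n" and B :: "(real^'n) set"
  assumes P: "prob_space M"
    and meas: "\<And>i. (\<lambda>\<omega>. Y \<omega> $ i) \<in> borel_measurable M"
    and sg: "subgaussian_vector M Y \<mu> \<sigma>" and "\<sigma> > 0"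
    and B: "finite B" "pairwise orthogonal B" "\<And>b. b \<in> B \<Longrightarrow> norm b = 1"
  shows "(\<integral>\<^sup>+\<omega>. ennreal (exp ((\<Sum>b\<in>B. (b \<bullet> (Y \<omega> - \<mu>))\<^sup>2) / (4 * \<sigma>\<^sup>2))) \<partial>M)
       \<le> ennreal (sqrt 2 ^ card B)"
proof -
  interpret prob_space M by (rule P)
  define PP where "PP = PiM B (\<lambda>_. std_normal)"
  interpret PP: prob_space PP
    unfolding PP_def by (intro prob_space_PiM prob_space_std_normal)
  interpret pair_sigma_finite M PP
    by (intro pair_sigma_finite.intro) unfold_locales
  define c where "c = 1 / (\<sigma> * sqrt 2)"
  have c2: "c\<^sup>2 = 1 / (2 * \<sigma>\<^sup>2)" using \<open>\<sigma> > 0\<close> by (simp add: c_def power2_eq_square)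
  define z where "z \<omega> b = b \<bullet> (Y \<omega> - \<mu>)" for \<omega> b
  have [measurable]: "(\<lambda>\<omega>. z \<omega> b) \<in> borel_measurable M" for b
    unfolding z_def by (rule inner_centered_measurable[OF meas])
  \<comment> \<open>Linearise the square with an independent Gaussian vector, then swap the integrals.\<close>
  have "(\<Sum>b\<in>B. (c * z \<omega> b)\<^sup>2) / 2 = (\<Sum>b\<in>B. (z \<omega> b)\<^sup>2) / (4 * \<sigma>\<^sup>2)" for \<omega>
    by (simp add: power_mult_distrib c2 sum_divide_distrib)
  then have "(\<integral>\<^sup>+\<omega>. ennreal (exp ((\<Sum>b\<in>B. (z \<omega> b)\<^sup>2) / (4 * \<sigma>\<^sup>2))) \<partial>M)
      = (\<integral>\<^sup>+\<omega>. (\<integral>\<^sup>+g. ennreal (exp (\<Sum>b\<in>B. (c * z \<omega> b) * g b)) \<partial>PP) \<partial>M)"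
    unfolding PP_def PiM_std_normal_exp_linear[OF B(1)] by simp
  also have "\<dots> = (\<integral>\<^sup>+g. (\<integral>\<^sup>+\<omega>. ennreal (exp (\<Sum>b\<in>B. (c * z \<omega> b) * g b)) \<partial>M) \<partial>PP)"
    by (rule Fubini'[symmetric]) (unfold PP_def, measurable)
  also have "\<dots> \<le> (\<integral>\<^sup>+g. ennreal (exp ((\<Sum>b\<in>B. (g b)\<^sup>2) / 4)) \<partial>PP)"
  proof (rule nn_integral_mono)
    fix g
    have "(\<integral>\<^sup>+\<omega>. ennreal (exp (\<Sum>b\<in>B. (c * z \<omega> b) * g b)) \<partial>M)
        = (\<integral>\<^sup>+\<omega>. ennreal (exp ((c *\<^sub>R (\<Sum>b\<in>B. g b *\<^sub>R b)) \<bullet> (Y \<omega> - \<mu>))) \<partial>M)"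
      by (simp add: z_def inner_sum_left sum_distrib_left mult.commute mult.left_commute)
    also have "\<dots> \<le> ennreal (exp (\<sigma>\<^sup>2 * (norm (c *\<^sub>R (\<Sum>b\<in>B. g b *\<^sub>R b)))\<^sup>2 / 2))"
      using sg unfolding subgaussian_vector_def by blast
    also have "\<sigma>\<^sup>2 * (norm (c *\<^sub>R (\<Sum>b\<in>B. g b *\<^sub>R b)))\<^sup>2 / 2 = (\<Sum>b\<in>B. (g b)\<^sup>2) / 4"
      using \<open>\<sigma> > 0\<close> by (simp add: power_mult_distrib norm_sum_orthonormal_sq[OF B] c2)
    finally show "(\<integral>\<^sup>+\<omega>. ennreal (exp (\<Sum>b\<in>B. (c * z \<omega> b) * g b)) \<partial>M)
        \<le> ennreal (exp ((\<Sum>b\<in>B. (g b)\<^sup>2) / 4))" .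
  qed
  also have "\<dots> = ennreal (sqrt 2 ^ card B)"
    unfolding PP_def by (rule PiM_std_normal_exp_square_quarter[OF B(1)])
  finally show ?thesis by (simp add: z_def)
qed

lemma subgaussian_quadratic_tail:
  fixes Y :: "'a \<Rightarrow> real^'n" and B :: "(real^'n) set"
  assumes P: "prob_space M"
    and meas: "\<And>i. (\<lambda>\<omega>. Y \<omega> $ i) \<in> borel_measurable M"
    and sg: "subgaussian_vector M Y \<mu> \<sigma>" and "\<sigma> > 0"
    and B: "finite B" "pairwise orthogonal B" "\<And>b. b \<in> B \<Longrightarrow> norm b = 1"
  shows "measure M {\<omega>\<in>space M. (\<Sum>b\<in>B. (b \<bullet> (Y \<omega> - \<mu>))\<^sup>2) > T}
       \<le> sqrt 2 ^ card B * exp (- T / (4 * \<sigma>\<^sup>2))"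
proof -
  interpret prob_space M by (rule P)
  define s where "s = 1 / (4 * \<sigma>\<^sup>2)"
  have "s > 0" using \<open>\<sigma> > 0\<close> by (simp add: s_def)
  define Q where "Q \<omega> = (\<Sum>b\<in>B. (b \<bullet> (Y \<omega> - \<mu>))\<^sup>2)" for \<omega>
  have [measurable]: "Q \<in> borel_measurable M"
    using inner_centered_measurable[OF meas] unfolding Q_def by measurable
  have "emeasure M {\<omega>\<in>space M. Q \<omega> > T} \<le> emeasure M {\<omega>\<in>space M. Q \<omega> \<ge> T}"
    by (intro emeasure_mono) auto
  also have "\<dots> \<le> ennreal (exp (-s * T)) * (\<integral>\<^sup>+\<omega>. ennreal (exp (s * Q \<omega>)) * indicator (space M) \<omega> \<partial>M)"
    by (rule Chernoff_ineq_nn_integral_ge[OF \<open>s > 0\<close>]) auto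
  also have "(\<integral>\<^sup>+\<omega>. ennreal (exp (s * Q \<omega>)) * indicator (space M) \<omega> \<partial>M)
      = (\<integral>\<^sup>+\<omega>. ennreal (exp (Q \<omega> / (4 * \<sigma>\<^sup>2))) \<partial>M)"
    by (intro nn_integral_cong) (auto simp: s_def)
  also have "ennreal (exp (-s * T)) * \<dots> \<le> ennreal (exp (-s * T)) * ennreal (sqrt 2 ^ card B)"
    unfolding Q_def by (intro mult_left_mono subgaussian_quadratic_mgf[OF P meas sg \<open>\<sigma> > 0\<close> B]) auto
  also have "\<dots> = ennreal (sqrt 2 ^ card B * exp (- T / (4 * \<sigma>\<^sup>2)))"
    by (simp add: ennreal_mult[symmetric] s_def mult.commute)
  finally show ?thesis
    unfolding Q_def emeasure_eq_measure by (simp add: ennreal_le_iff)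
qed

lemma subgaussian_span_tail:
  fixes Y :: "'a \<Rightarrow> real^'n" and S :: "(real^'n) set"
  assumes P: "prob_space M"
    and meas: "\<And>i. (\<lambda>\<omega>. Y \<omega> $ i) \<in> borel_measurable M"
    and sg: "subgaussian_vector M Y \<mu> \<sigma>" and "\<sigma> > 0" and "finite S"
  obtains E where "E \<in> sets M" "measure M E \<le> sqrt 2 ^ card S * exp (- T / (4 * \<sigma>\<^sup>2))"
    "\<And>\<omega> w. \<omega> \<in> space M - E \<Longrightarrow> w \<in> span S \<Longrightarrow> (Y \<omega> - \<mu>) \<bullet> w \<le> norm w * sqrt T"
proof -
  obtain B where B: "pairwise orthogonal B" "\<And>b. b \<in> B \<Longrightarrow> norm b = 1"
    "independent B" "card B = dim (span S)" "span B = span S"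
    using orthonormal_basis_subspace[OF subspace_span] by metis
  have "finite B" using B(3) independent_imp_finite by blast
  have "card B \<le> card S"
    using B(4) dim_le_card[OF order.refl \<open>finite S\<close>] by simp
  define E where "E = {\<omega>\<in>space M. (\<Sum>b\<in>B. (b \<bullet> (Y \<omega> - \<mu>))\<^sup>2) > T}"
  have "E \<in> sets M"
    using inner_centered_measurable[OF meas] unfolding E_def by measurable
  moreover have "measure M E \<le> sqrt 2 ^ card S * exp (- T / (4 * \<sigma>\<^sup>2))"
  proof -
    have "measure M E \<le> sqrt 2 ^ card B * exp (- T / (4 * \<sigma>\<^sup>2))"
      unfolding E_def by (rule subgaussian_quadratic_tail[OF P meas sg \<open>\<sigma> > 0\<close> \<open>finite B\<close> B(1,2)])
    also have "\<dots> \<le> sqrt 2 ^ card S * exp (- T / (4 * \<sigma>\<^sup>2))"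
      using \<open>card B \<le> card S\<close> by (intro mult_right_mono power_increasing) auto
    finally show ?thesis .
  qed
  moreover have "(Y \<omega> - \<mu>) \<bullet> w \<le> norm w * sqrt T" if "\<omega> \<in> space M - E" "w \<in> span S" for \<omega> w
  proof -
    have "(Y \<omega> - \<mu>) \<bullet> w \<le> norm w * sqrt (\<Sum>b\<in>B. (b \<bullet> (Y \<omega> - \<mu>))\<^sup>2)"
      using inner_le_norm_mult_projection[OF \<open>finite B\<close> B(1,2)] that B(5) by simp
    also have "\<dots> \<le> norm w * sqrt T"
      using that by (intro mult_left_mono) (auto simp: E_def)
    finally show ?thesis .
  qed
  ultimately show ?thesis using that by blast
qed

section \<open>Coding lengths and the deviation event\<close>

lemma coding_length_nonneg: "coding_length cl \<Longrightarrow> 0 \<le> cl F"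
  unfolding coding_length_def by simp

lemma coding_length_weight_sum_le:
  fixes cl :: "'p::finite set \<Rightarrow> ereal"
  assumes "coding_length cl"
  shows "(\<Sum>F\<in>UNIV. pow2neg (cl F)) \<le> 2"
proof -
  have "(\<Sum>F\<in>UNIV. pow2neg (cl F)) = pow2neg (cl {}) + (\<Sum>F\<in>Pow UNIV - {{}}. pow2neg (cl F))"
    by (subst sum.remove[of _ "{}"]) auto
  also have "pow2neg (cl {}) = 1"
    using assms by (simp add: coding_length_def pow2neg_def zero_ereal_def)
  finally show ?thesis using assms unfolding coding_length_def by simp
qed

text \<open>The constants 7.4 and 4.7 are chosen so that, using \<open>ln 2 < 1\<close>, the tail bound for a subspace
  of dimension \<open>d \<le> k + 1\<close> fits into the share \<open>\<eta>/3 \<cdot> 2^(-r)\<close> of a set of size \<open>k\<close> and code length \<open>r\<close>.\<close>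
lemma span_tail_le_coding_weight:
  fixes d :: nat and k r \<eta> \<sigma> :: real
  assumes d: "real d \<le> k + 1" and "k \<ge> 0" "r \<ge> 0" "0 < \<eta>" "\<eta> \<le> 6" "\<sigma> > 0"
  shows "sqrt 2 ^ d * exp (- (\<sigma>\<^sup>2 * (7.4 * (k + r) + 4.7 * ln (6 / \<eta>))) / (4 * \<sigma>\<^sup>2))
       \<le> \<eta> / 3 * 2 powr (- r)"
proof -
  define l where "l = ln (2::real)"
  define L where "L = ln (6 / \<eta>)"
  have l: "0 < l" "l < 1" using ln_2_less_1 by (auto simp: l_def)
  have "L \<ge> 0" using \<open>0 < \<eta>\<close> \<open>\<eta> \<le> 6\<close> by (simp add: L_def)
  have "sqrt 2 = exp (l / 2)"
    by (simp add: l_def exp_divide_power_eq[of 2] powr_half_sqrt[symmetric] powr_def)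
  then have "sqrt 2 ^ d = exp (real d * (l / 2))" by (simp only: exp_of_nat_mult)
  moreover have "- (\<sigma>\<^sup>2 * (7.4 * (k + r) + 4.7 * L)) / (4 * \<sigma>\<^sup>2) = - (7.4 * (k + r) + 4.7 * L) / 4"
    using \<open>\<sigma> > 0\<close> by (simp add: field_simps)
  ultimately have lhs: "sqrt 2 ^ d * exp (- (\<sigma>\<^sup>2 * (7.4 * (k + r) + 4.7 * L)) / (4 * \<sigma>\<^sup>2))
      = exp (real d * (l / 2) + - (7.4 * (k + r) + 4.7 * L) / 4)"
    by (simp add: exp_add)
  have "exp (l - L - r * l) = exp l * exp (- L) * exp (- r * l)" by (simp flip: exp_add)
  also have "\<dots> = 2 * (\<eta> / 6) * 2 powr (- r)"
    using \<open>0 < \<eta>\<close> by (simp add: l_def L_def exp_minus powr_def)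
  finally have rhs: "\<eta> / 3 * 2 powr (- r) = exp (l - L - r * l)" by simp
  have "real d * l \<le> (k + 1) * l" using d l by (intro mult_right_mono) auto
  moreover have "k * l \<le> k" "r * l \<le> r" using \<open>k \<ge> 0\<close> \<open>r \<ge> 0\<close> l by (simp_all add: mult_left_le)
  ultimately have "real d * (l / 2) + - (7.4 * (k + r) + 4.7 * L) / 4 \<le> l - L - r * l"
    using \<open>k \<ge> 0\<close> \<open>r \<ge> 0\<close> \<open>L \<ge> 0\<close> l by (simp add: field_simps)
  then show ?thesis unfolding lhs[unfolded L_def] rhs[unfolded L_def] L_def by simp
qed

text \<open>Here \<open>L\<close> stands for \<open>ln (6/\<eta>)\<close>.  The clause for \<open>\<sigma> = 0\<close> is needed because \<open>0 \<cdot> \<infinity> = 0\<close>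
  in \<open>ereal\<close>: for \<open>\<sigma> = \<lambda> = 0\<close> the complexity of \<open>bh\<close> may be infinite.\<close>
definition noise_controlled ::
    "real^'p^'n \<Rightarrow> ('p set \<Rightarrow> ereal) \<Rightarrow> real \<Rightarrow> real \<Rightarrow> real^'p \<Rightarrow> real^'n \<Rightarrow> real^'n \<Rightarrow> bool" where
  "noise_controlled X cl \<sigma> L bb \<mu> y \<longleftrightarrow>
     (\<sigma> = 0 \<longrightarrow> y = \<mu>) \<and>
     (\<mu> - y) \<bullet> (X *v bb - \<mu>) \<le> \<sigma> * sqrt (2 * L) * norm (X *v bb - \<mu>) \<and>
     (\<forall>F r. cl F = ereal r \<longrightarrow> (\<forall>w \<in> span (insert \<mu> ((\<lambda>j. column j X) ` F)).
        (y - \<mu>) \<bullet> w \<le> norm w * (\<sigma> * sqrt (7.4 * (real (card F) + r) + 4.7 * L))))"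

lemma span_columns_deviation_event:
  fixes Y :: "'a \<Rightarrow> real^'n" and X :: "real^'p^'n" and cl :: "'p set \<Rightarrow> ereal"
  assumes P: "prob_space M"
    and meas: "\<And>i. (\<lambda>\<omega>. Y \<omega> $ i) \<in> borel_measurable M"
    and sg: "subgaussian_vector M Y \<mu> \<sigma>" and "\<sigma> > 0"
    and cl: "coding_length cl" and "0 < \<eta>" "\<eta> \<le> 6"
  obtains E where "E \<in> sets M" "measure M E \<le> \<eta> / 3 * pow2neg (cl F)"
    "\<And>\<omega> r w. \<omega> \<in> space M - E \<Longrightarrow> cl F = ereal r \<Longrightarrow> w \<in> span (insert \<mu> ((\<lambda>j. column j X) ` F)) \<Longrightarrow>
       (Y \<omega> - \<mu>) \<bullet> w \<le> norm w * (\<sigma> * sqrt (7.4 * (real (card F) + r) + 4.7 * ln (6 / \<eta>)))"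
proof (cases "cl F")
  case (real r)
  define S where "S = insert \<mu> ((\<lambda>j. column j X) ` F)"
  define T where "T = \<sigma>\<^sup>2 * (7.4 * (real (card F) + r) + 4.7 * ln (6 / \<eta>))"
  have "r \<ge> 0" using coding_length_nonneg[OF cl, of F] real by simp
  have "finite S" by (simp add: S_def)
  have "real (card S) \<le> real (card F) + 1"
    using card_image_le[of F "\<lambda>j. column j X"] unfolding S_def by (simp add: card_insert_if)
  obtain E where E: "E \<in> sets M" "measure M E \<le> sqrt 2 ^ card S * exp (- T / (4 * \<sigma>\<^sup>2))"
    "\<And>\<omega> w. \<omega> \<in> space M - E \<Longrightarrow> w \<in> span S \<Longrightarrow> (Y \<omega> - \<mu>) \<bullet> w \<le> norm w * sqrt T"
    using subgaussian_span_tail[OF P meas sg \<open>\<sigma> > 0\<close> \<open>finite S\<close>] by blast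
  have "measure M E \<le> \<eta> / 3 * pow2neg (cl F)"
    using E(2) span_tail_le_coding_weight[OF \<open>real (card S) \<le> _\<close> _ \<open>r \<ge> 0\<close> \<open>0 < \<eta>\<close> \<open>\<eta> \<le> 6\<close> \<open>\<sigma> > 0\<close>]
    by (simp add: T_def real pow2neg_def)
  moreover have "sqrt T = \<sigma> * sqrt (7.4 * (real (card F) + r) + 4.7 * ln (6 / \<eta>))"
    using \<open>\<sigma> > 0\<close> by (simp add: T_def real_sqrt_mult)
  ultimately show ?thesis
    using that[OF E(1)] E(3) real unfolding S_def by auto
next
  case PInf
  then show ?thesis using that[of "{}"] by (simp add: pow2neg_def)
next
  case MInf
  then show ?thesis using coding_length_nonneg[OF cl, of F] by simp
qed

lemma span_columns_deviation_events:
  fixes Y :: "'a \<Rightarrow> real^'n" and X :: "real^'p^'n" and cl :: "'p set \<Rightarrow> ereal"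
  assumes P: "prob_space M"
    and meas: "\<And>i. (\<lambda>\<omega>. Y \<omega> $ i) \<in> borel_measurable M"
    and sg: "subgaussian_vector M Y \<mu> \<sigma>" and "\<sigma> > 0"
    and cl: "coding_length cl" and "0 < \<eta>" "\<eta> \<le> 6"
  obtains E where "\<And>F. E F \<in> sets M" "\<And>F. measure M (E F) \<le> \<eta> / 3 * pow2neg (cl F)"
    "\<And>F \<omega> r w. \<omega> \<in> space M - E F \<Longrightarrow> cl F = ereal r \<Longrightarrow>
       w \<in> span (insert \<mu> ((\<lambda>j. column j X) ` F)) \<Longrightarrow>
       (Y \<omega> - \<mu>) \<bullet> w \<le> norm w * (\<sigma> * sqrt (7.4 * (real (card F) + r) + 4.7 * ln (6 / \<eta>)))"
proof -
  define good where "good F E \<longleftrightarrow> E \<in> sets M \<and> measure M E \<le> \<eta> / 3 * pow2neg (cl F) \<and>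
      (\<forall>\<omega> r w. \<omega> \<in> space M - E \<longrightarrow> cl F = ereal r \<longrightarrow> w \<in> span (insert \<mu> ((\<lambda>j. column j X) ` F)) \<longrightarrow>
         (Y \<omega> - \<mu>) \<bullet> w \<le> norm w * (\<sigma> * sqrt (7.4 * (real (card F) + r) + 4.7 * ln (6 / \<eta>))))"
    for F E
  have "\<exists>E. good F E" for F
  proof -
    obtain E where "E \<in> sets M" "measure M E \<le> \<eta> / 3 * pow2neg (cl F)"
      "\<And>\<omega> r w. \<omega> \<in> space M - E \<Longrightarrow> cl F = ereal r \<Longrightarrow> w \<in> span (insert \<mu> ((\<lambda>j. column j X) ` F)) \<Longrightarrow>
         (Y \<omega> - \<mu>) \<bullet> w \<le> norm w * (\<sigma> * sqrt (7.4 * (real (card F) + r) + 4.7 * ln (6 / \<eta>)))"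
      using span_columns_deviation_event[OF assms] by blast
    then show ?thesis unfolding good_def by blast
  qed
  then obtain E where E: "good F (E F)" for F by metis
  show ?thesis by (rule that[of E]) (use E in \<open>auto simp: good_def\<close>)
qed

lemma measure_UNION_coding_weighted_le:
  fixes cl :: "'p::finite set \<Rightarrow> ereal"
  assumes "prob_space M" "coding_length cl" "c \<ge> 0"
    and "\<And>F. E F \<in> sets M" "\<And>F. measure M (E F) \<le> c * pow2neg (cl F)"
  shows "measure M (\<Union>F. E F) \<le> 2 * c"
proof -
  interpret prob_space M by (rule assms(1))
  have "measure M (\<Union>F. E F) \<le> (\<Sum>F\<in>UNIV. measure M (E F))"
    using assms(4) by (intro measure_UNION_le) auto
  also have "\<dots> \<le> (\<Sum>F\<in>UNIV. c * pow2neg (cl F))" by (intro sum_mono assms(5))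
  also have "\<dots> = c * (\<Sum>F\<in>UNIV. pow2neg (cl F))" by (simp add: sum_distrib_left)
  also have "\<dots> \<le> c * 2"
    using coding_length_weight_sum_le[OF assms(2)] assms(3) by (intro mult_left_mono) auto
  finally show ?thesis by simp
qed

lemma noise_controlled_event_subgaussian:
  fixes Y :: "'a \<Rightarrow> real^'n" and X :: "real^'p^'n" and cl :: "'p set \<Rightarrow> ereal"
  assumes P: "prob_space M"
    and meas: "\<And>i. (\<lambda>\<omega>. Y \<omega> $ i) \<in> borel_measurable M"
    and sg: "subgaussian_vector M Y \<mu> \<sigma>" and "\<sigma> > 0"
    and cl: "coding_length cl" and \<eta>: "0 < \<eta>" "\<eta> < 1"
  shows "\<exists>A \<in> sets M. measure M A > 1 - \<eta> \<and>
    (\<forall>\<omega> \<in> A. noise_controlled X cl \<sigma> (ln (6 / \<eta>)) bb \<mu> (Y \<omega>))"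
proof -
  interpret prob_space M by (rule P)
  define L where "L = ln (6 / \<eta>)"
  have "L \<ge> 0" using \<eta> by (simp add: L_def)
  define E0 where "E0 = {\<omega>\<in>space M. (\<mu> - X *v bb) \<bullet> (Y \<omega> - \<mu>) > \<sigma> * sqrt (2 * L) * norm (\<mu> - X *v bb)}"
  have E0: "E0 \<in> sets M"
    using inner_centered_measurable[OF meas] unfolding E0_def by measurable
  have "measure M E0 \<le> exp (- L)"
    unfolding E0_def by (rule subgaussian_inner_tail[OF P meas sg \<open>\<sigma> > 0\<close> \<open>L \<ge> 0\<close>])
  also have "exp (- L) = \<eta> / 6" using \<eta> by (simp add: L_def exp_minus)
  finally have "measure M E0 \<le> \<eta> / 6" .
  have "\<eta> \<le> 6" using \<eta> by simp
  obtain E where E: "\<And>F. E F \<in> sets M" "\<And>F. measure M (E F) \<le> \<eta> / 3 * pow2neg (cl F)"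
    and E_good: "\<And>F \<omega> r w. \<omega> \<in> space M - E F \<Longrightarrow> cl F = ereal r \<Longrightarrow>
        w \<in> span (insert \<mu> ((\<lambda>j. column j X) ` F)) \<Longrightarrow>
        (Y \<omega> - \<mu>) \<bullet> w \<le> norm w * (\<sigma> * sqrt (7.4 * (real (card F) + r) + 4.7 * L))"
    using span_columns_deviation_events[OF P meas sg \<open>\<sigma> > 0\<close> cl \<open>0 < \<eta>\<close> \<open>\<eta> \<le> 6\<close>]
    unfolding L_def by blast
  define A where "A = space M - (E0 \<union> (\<Union>F. E F))"
  have "A \<in> sets M" unfolding A_def using E0 E(1) by auto
  have "measure M (E0 \<union> (\<Union>F. E F)) \<le> measure M E0 + measure M (\<Union>F. E F)"
    using E0 E(1) by (intro measure_Un_le) auto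
  also have "\<dots> \<le> \<eta> / 6 + 2 * (\<eta> / 3)"
    using \<open>measure M E0 \<le> \<eta> / 6\<close> measure_UNION_coding_weighted_le[OF P cl _ E] \<eta> by simp
  finally have "measure M A > 1 - \<eta>"
    unfolding A_def using prob_compl[of "E0 \<union> (\<Union>F. E F)"] E0 E(1) \<eta> by auto
  moreover have "noise_controlled X cl \<sigma> L bb \<mu> (Y \<omega>)" if "\<omega> \<in> A" for \<omega>
  proof -
    have "(\<mu> - X *v bb) \<bullet> (Y \<omega> - \<mu>) \<le> \<sigma> * sqrt (2 * L) * norm (\<mu> - X *v bb)"
      using that by (auto simp: A_def E0_def)
    moreover have "(\<mu> - Y \<omega>) \<bullet> (X *v bb - \<mu>) = (\<mu> - X *v bb) \<bullet> (Y \<omega> - \<mu>)"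
      by (simp add: inner_diff_left inner_diff_right inner_commute)
    ultimately show ?thesis
      using that \<open>\<sigma> > 0\<close> E_good unfolding noise_controlled_def A_def
      by (auto simp: norm_minus_commute)
  qed
  ultimately show ?thesis using \<open>A \<in> sets M\<close> unfolding L_def by blast
qed

lemma noise_controlled_with_high_probability:
  fixes M :: "'a measure" and Y :: "'a \<Rightarrow> real^'n" and X :: "real^'p^'n" and cl :: "'p set \<Rightarrow> ereal"
  assumes P: "prob_space M"
    and indep: "prob_space.indep_vars M (\<lambda>_. borel) (\<lambda>i \<omega>. Y \<omega> $ i) UNIV"
    and integ: "\<And>i. integrable M (\<lambda>\<omega>. Y \<omega> $ i)"
    and "\<sigma> \<ge> 0"
    and mgf_integ: "\<And>i t. integrable M
          (\<lambda>\<omega>. exp (t * (Y \<omega> $ i - prob_space.expectation M (\<lambda>\<omega>. Y \<omega> $ i))))"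
    and subgauss: "\<And>i t. prob_space.expectation M
          (\<lambda>\<omega>. exp (t * (Y \<omega> $ i - prob_space.expectation M (\<lambda>\<omega>. Y \<omega> $ i))))
          \<le> exp (\<sigma>\<^sup>2 * t\<^sup>2 / 2)"
    and cl: "coding_length cl" and \<eta>: "0 < \<eta>" "\<eta> < 1"
  shows "\<exists>A \<in> sets M. measure M A > 1 - \<eta> \<and> (\<forall>\<omega> \<in> A. noise_controlled X cl \<sigma> (ln (6 / \<eta>)) bb
           (\<chi> i. prob_space.expectation M (\<lambda>\<omega>. Y \<omega> $ i)) (Y \<omega>))"
proof (cases "\<sigma> = 0")
  case True
  interpret prob_space M by (rule P)
  define EY :: "real^'n" where "EY = (\<chi> i. expectation (\<lambda>\<omega>. Y \<omega> $ i))"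
  have [measurable]: "(\<lambda>\<omega>. Y \<omega> $ i) \<in> borel_measurable M" for i using integ by auto
  define A where "A = {\<omega>\<in>space M. \<forall>i. Y \<omega> $ i = EY $ i}"
  have "A \<in> sets M" unfolding A_def by measurable
  have "AE \<omega> in M. \<forall>i\<in>UNIV. Y \<omega> $ i = EY $ i"
    using subgaussian_zero_AE_eq_expectation[OF P mgf_integ] subgauss True
    by (intro AE_finite_allI) (auto simp: EY_def)
  then have "prob A = 1" using prob_Collect_eq_1 \<open>A \<in> sets M\<close> unfolding A_def by auto
  moreover have "noise_controlled X cl \<sigma> L bb EY (Y \<omega>)" if "\<omega> \<in> A" for \<omega> L
  proof -
    have "Y \<omega> = EY" using that by (simp add: A_def vec_eq_iff)
    then show ?thesis by (simp add: noise_controlled_def True)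
  qed
  ultimately show ?thesis using \<open>A \<in> sets M\<close> \<eta> unfolding EY_def by (intro bexI[of _ A]) auto
next
  case False
  have "(\<lambda>\<omega>. Y \<omega> $ i) \<in> borel_measurable M" for i using integ by auto
  with subgaussian_vector_indep_components[OF P indep mgf_integ subgauss] False \<open>\<sigma> \<ge> 0\<close>
  show ?thesis by (intro noise_controlled_event_subgaussian[OF P _ _ _ cl \<eta>]) auto
qed

section \<open>The deterministic oracle inequalities\<close>

lemma excess_risk_bound:
  fixes u v \<xi> :: "'a::real_inner" and a :: real
  assumes opt: "(norm (u - \<xi>))\<^sup>2 + lam * ch \<le> (norm (v - \<xi>))\<^sup>2 + lam * cb + eps"
    and lin: "- (\<xi> \<bullet> v) \<le> \<sigma> * sqrt (2 * L) * norm v"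
    and fit: "\<xi> \<bullet> u \<le> norm u * K"
    and K: "K\<^sup>2 \<le> \<sigma>\<^sup>2 * (7.4 * ch + 4.7 * L)"
    and "a > 0"
  shows "(norm u)\<^sup>2 \<le> (1 + a) * ((norm v)\<^sup>2 + 2 * \<sigma> * sqrt (2 * L) * norm v) + (1 + a) * lam * cb
     + (7.4 * (2 + a + 1 / a) * \<sigma>\<^sup>2 - (1 + a) * lam) * ch + 4.7 * \<sigma>\<^sup>2 * (2 + a + 1 / a) * L
     + (1 + a) * eps"
proof -
  have square: "(norm (w - \<xi>))\<^sup>2 = (norm w)\<^sup>2 - 2 * (\<xi> \<bullet> w) + (norm \<xi>)\<^sup>2" for w
    by (simp add: power2_norm_eq_inner inner_diff inner_commute algebra_simps)
  have expanded: "(norm u)\<^sup>2 \<le> (norm v)\<^sup>2 + 2 * (\<xi> \<bullet> u) - 2 * (\<xi> \<bullet> v) + lam * (cb - ch) + eps"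
    using opt square[of u] square[of v] by (simp add: algebra_simps)
  have young: "2 * (norm u * K) \<le> a / (1 + a) * (norm u)\<^sup>2 + (1 + a) / a * K\<^sup>2"
  proof -
    have "a + a * a > 0" using \<open>a > 0\<close> by (simp add: add_pos_pos)
    then have "a / (1 + a) * (norm u)\<^sup>2 + (1 + a) / a * K\<^sup>2 - 2 * (norm u * K)
        = (a * norm u - (1 + a) * K)\<^sup>2 / (a * (1 + a))"
      using \<open>a > 0\<close> by (simp add: field_simps power2_eq_square)
    moreover have "(a * norm u - (1 + a) * K)\<^sup>2 / (a * (1 + a)) \<ge> 0" using \<open>a > 0\<close> by simp
    ultimately show ?thesis by linarith
  qed
  have "(norm u)\<^sup>2 / (1 + a) = (norm u)\<^sup>2 - a / (1 + a) * (norm u)\<^sup>2"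
    using \<open>a > 0\<close> by (simp add: field_simps)
  then have "(norm u)\<^sup>2 / (1 + a) \<le> (norm v)\<^sup>2 + 2 * \<sigma> * sqrt (2 * L) * norm v + lam * (cb - ch) + eps
      + (1 + a) / a * K\<^sup>2"
    using expanded young lin fit by linarith
  moreover have "(1 + a) / a * K\<^sup>2 \<le> (1 + a) / a * (\<sigma>\<^sup>2 * (7.4 * ch + 4.7 * L))"
    using K \<open>a > 0\<close> by (intro mult_left_mono) auto
  ultimately have "(norm u)\<^sup>2 / (1 + a) \<le> (norm v)\<^sup>2 + 2 * \<sigma> * sqrt (2 * L) * norm v + lam * (cb - ch)
      + eps + (1 + a) / a * (\<sigma>\<^sup>2 * (7.4 * ch + 4.7 * L))"
    by linarith
  then have "(norm u)\<^sup>2 \<le> ((norm v)\<^sup>2 + 2 * \<sigma> * sqrt (2 * L) * norm v + lam * (cb - ch) + eps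
      + (1 + a) / a * (\<sigma>\<^sup>2 * (7.4 * ch + 4.7 * L))) * (1 + a)"
    using \<open>a > 0\<close> by (simp add: pos_divide_le_eq)
  also have "\<dots> = (1 + a) * ((norm v)\<^sup>2 + 2 * \<sigma> * sqrt (2 * L) * norm v) + (1 + a) * lam * cb
     + (7.4 * (2 + a + 1 / a) * \<sigma>\<^sup>2 - (1 + a) * lam) * ch + 4.7 * \<sigma>\<^sup>2 * (2 + a + 1 / a) * L
     + (1 + a) * eps"
    using \<open>a > 0\<close> by (simp add: field_simps power2_eq_square)
  finally show ?thesis .
qed

lemma parameter_error_bound:
  fixes u v :: "'a::real_inner"
  assumes u: "(norm u)\<^sup>2 \<le> 2 * ((norm v)\<^sup>2 + 2 * \<sigma> * sqrt (2 * L) * norm v) + 2 * lam * cb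
     + (29.6 * \<sigma>\<^sup>2 - 2 * lam) * ch + 18.8 * \<sigma>\<^sup>2 * L + 2 * eps"
    and "L \<ge> 0"
  shows "(norm (u - v))\<^sup>2 \<le> 10 * (norm v)\<^sup>2 + 2.5 * lam * cb + (37 * \<sigma>\<^sup>2 - 2.5 * lam) * ch
     + 29 * \<sigma>\<^sup>2 * L + 2.5 * eps"
proof -
  have "2 * \<sigma> * sqrt (2 * L) * norm v \<le> (norm v)\<^sup>2 + 2 * \<sigma>\<^sup>2 * L"
    using zero_le_power2[of "norm v - \<sigma> * sqrt (2 * L)"] \<open>L \<ge> 0\<close>
    by (simp add: power2_eq_square algebra_simps)
  moreover have "0 \<le> \<sigma>\<^sup>2 * L" using \<open>L \<ge> 0\<close> by simp
  ultimately have "1.25 * (norm u)\<^sup>2 + 5 * (norm v)\<^sup>2 \<le> 10 * (norm v)\<^sup>2 + 2.5 * lam * cb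
     + (37 * \<sigma>\<^sup>2 - 2.5 * lam) * ch + 29 * \<sigma>\<^sup>2 * L + 2.5 * eps"
    using u by (simp add: algebra_simps)
  moreover have "(norm (u - v))\<^sup>2 \<le> (norm u + norm v)\<^sup>2"
    using norm_triangle_ineq4[of u v] by (intro power_mono) auto
  moreover have "(norm u + norm v)\<^sup>2 \<le> 1.25 * (norm u)\<^sup>2 + 5 * (norm v)\<^sup>2"
    using zero_le_power2[of "norm u / 2 - 2 * norm v"] by (simp add: power2_eq_square algebra_simps)
  ultimately show ?thesis by linarith
qed

lemma cc_attained:
  fixes cl :: "'p::finite set \<Rightarrow> ereal"
  obtains F where "supp \<beta> \<subseteq> F" "cc cl \<beta> = cc_set cl F"
proof -
  have "Inf (cc_set cl ` {F. supp \<beta> \<subseteq> F}) \<in> cc_set cl ` {F. supp \<beta> \<subseteq> F}"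
    by (rule finite_Inf_in) (auto simp: inf_min min_def)
  then show ?thesis using that unfolding cc_def by auto
qed

lemma cc_nonneg: "coding_length cl \<Longrightarrow> 0 \<le> cc cl \<beta>"
  by (metis cc_attained cc_set_def coding_length_nonneg add_nonneg_nonneg ereal_less_eq(5) of_nat_0_le_iff)

lemma mult_vec_in_span_columns:
  fixes X :: "real^'p^'n"
  assumes "supp \<beta> \<subseteq> F"
  shows "X *v \<beta> \<in> span ((\<lambda>j. column j X) ` F)"
proof -
  have "X *v \<beta> = (\<Sum>j\<in>UNIV. (\<beta>$j) *\<^sub>R column j X)"
    by (simp add: matrix_mult_sum scalar_mult_eq_scaleR)
  also have "\<dots> = (\<Sum>j\<in>F. (\<beta>$j) *\<^sub>R column j X)"
    using assms by (intro sum.mono_neutral_right) (auto simp: supp_def)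
  also have "\<dots> \<in> span ((\<lambda>j. column j X) ` F)"
    by (intro span_sum span_scale span_base) auto
  finally show ?thesis .
qed

lemma rho_minus_mult_norm_le:
  fixes X :: "real^'p^'n"
  assumes "supp d \<subseteq> H" "cc_set cl H \<le> s"
  shows "ereal (real CARD('n)) * rho_minus X cl s * ereal ((norm d)\<^sup>2) \<le> ereal ((norm (X *v d))\<^sup>2)"
proof (cases "d = 0")
  case True
  then show ?thesis by (simp add: zero_ereal_def[symmetric])
next
  case False
  have "rho_minus X cl s \<le> rho_set X H"
    unfolding rho_minus_def using assms(2) by (intro INF_lower) auto
  also have "\<dots> \<le> ereal ((1 / real CARD('n)) * (norm (X *v d))\<^sup>2 / (norm d)\<^sup>2)"
    unfolding rho_set_def using assms(1) False by (intro INF_lower) auto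
  finally have "ereal (real CARD('n)) * rho_minus X cl s * ereal ((norm d)\<^sup>2)
      \<le> ereal (real CARD('n)) * ereal ((1 / real CARD('n)) * (norm (X *v d))\<^sup>2 / (norm d)\<^sup>2)
         * ereal ((norm d)\<^sup>2)"
    by (intro ereal_mult_right_mono ereal_mult_left_mono) auto
  also have "\<dots> = ereal ((norm (X *v d))\<^sup>2)"
    using False by simp
  finally show ?thesis .
qed

lemma rho_minus_cc_add_mult_norm_le:
  fixes X :: "real^'p^'n"
  assumes "subadditive_cc cl"
  shows "ereal (real CARD('n)) * rho_minus X cl (cc cl b + cc cl b') * ereal ((norm (b - b'))\<^sup>2)
      \<le> ereal ((norm (X *v (b - b')))\<^sup>2)"
proof -
  obtain F G where "supp b \<subseteq> F" "cc cl b = cc_set cl F" "supp b' \<subseteq> G" "cc cl b' = cc_set cl G"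
    by (metis cc_attained)
  moreover have "supp (b - b') \<subseteq> supp b \<union> supp b'" unfolding supp_def by auto
  ultimately show ?thesis
    using assms unfolding subadditive_cc_def by (intro rho_minus_mult_norm_le[of _ "F \<union> G"]) auto
qed

lemma ereal_mult_eq_real_of_ereal:
  assumes "c \<ge> 0" "c \<noteq> \<infinity> \<or> r = 0"
  shows "ereal r * c = ereal (r * real_of_ereal c)"
  using assms by (cases c) auto

lemma noise_controlled_fit:
  fixes X :: "real^'p^'n"
  assumes noise: "noise_controlled X cl \<sigma> L bb \<mu> y" and cl: "coding_length cl"
    and "cc cl b \<noteq> \<infinity> \<or> \<sigma> = 0"
  shows "(y - \<mu>) \<bullet> (X *v b - \<mu>) \<le> norm (X *v b - \<mu>) * (\<sigma> * sqrt (7.4 * real_of_ereal (cc cl b) + 4.7 * L))"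
proof (cases "\<sigma> = 0")
  case True
  then show ?thesis using noise by (simp add: noise_controlled_def)
next
  case False
  obtain F where F: "supp b \<subseteq> F" "cc cl b = cc_set cl F" by (rule cc_attained)
  then obtain r where r: "cl F = ereal r" "real_of_ereal (cc cl b) = real (card F) + r"
    using False assms(3) coding_length_nonneg[OF cl, of F] unfolding cc_set_def
    by (cases "cl F") auto
  have "X *v b \<in> span (insert \<mu> ((\<lambda>j. column j X) ` F))"
    using mult_vec_in_span_columns[OF F(1)] span_mono[OF subset_insertI] by blast
  then have "X *v b - \<mu> \<in> span (insert \<mu> ((\<lambda>j. column j X) ` F))"
    by (intro span_diff) (auto intro: span_base)
  then show ?thesis using noise r unfolding noise_controlled_def by auto
qed

lemma oracle_bounds_real:
  fixes X :: "real^'p^'n" and y \<mu> :: "real^'n"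
  assumes noise: "noise_controlled X cl \<sigma> L bb \<mu> y" and cl: "coding_length cl" and "L \<ge> 0"
    and "cc cl bh \<noteq> \<infinity> \<or> \<sigma> = 0" and ch: "ch = real_of_ereal (cc cl bh)"
    and opt: "(norm (X *v bh - y))\<^sup>2 + lam * ch \<le> (norm (X *v bb - y))\<^sup>2 + lam * cb + eps"
  shows "a > 0 \<Longrightarrow> (norm (X *v bh - \<mu>))\<^sup>2
      \<le> (1 + a) * ((norm (X *v bb - \<mu>))\<^sup>2 + 2 * \<sigma> * sqrt (2 * L) * norm (X *v bb - \<mu>))
         + (1 + a) * lam * cb + (7.4 * (2 + a + 1 / a) * \<sigma>\<^sup>2 - (1 + a) * lam) * ch
         + 4.7 * \<sigma>\<^sup>2 * (2 + a + 1 / a) * L + (1 + a) * eps"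
    and "(norm (X *v (bh - bb)))\<^sup>2 \<le> 10 * (norm (X *v bb - \<mu>))\<^sup>2 + 2.5 * lam * cb
      + (37 * \<sigma>\<^sup>2 - 2.5 * lam) * ch + 29 * \<sigma>\<^sup>2 * L + 2.5 * eps"
proof -
  have opt': "(norm ((X *v bh - \<mu>) - (y - \<mu>)))\<^sup>2 + lam * ch
      \<le> (norm ((X *v bb - \<mu>) - (y - \<mu>)))\<^sup>2 + lam * cb + eps"
    using opt by simp
  have lin: "- ((y - \<mu>) \<bullet> (X *v bb - \<mu>)) \<le> \<sigma> * sqrt (2 * L) * norm (X *v bb - \<mu>)"
    using noise unfolding noise_controlled_def by (simp add: inner_diff_left)
  have fit: "(y - \<mu>) \<bullet> (X *v bh - \<mu>) \<le> norm (X *v bh - \<mu>) * (\<sigma> * sqrt (7.4 * ch + 4.7 * L))"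
    unfolding ch using noise_controlled_fit[OF noise cl] assms(4) by auto
  have "ch \<ge> 0" unfolding ch using cc_nonneg[OF cl] by (simp add: real_of_ereal_pos)
  then have K: "(\<sigma> * sqrt (7.4 * ch + 4.7 * L))\<^sup>2 \<le> \<sigma>\<^sup>2 * (7.4 * ch + 4.7 * L)"
    using \<open>L \<ge> 0\<close> by (simp add: power_mult_distrib)
  note excess = excess_risk_bound[OF opt' lin fit K]
  then show "a > 0 \<Longrightarrow> (norm (X *v bh - \<mu>))\<^sup>2
      \<le> (1 + a) * ((norm (X *v bb - \<mu>))\<^sup>2 + 2 * \<sigma> * sqrt (2 * L) * norm (X *v bb - \<mu>))
         + (1 + a) * lam * cb + (7.4 * (2 + a + 1 / a) * \<sigma>\<^sup>2 - (1 + a) * lam) * ch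
         + 4.7 * \<sigma>\<^sup>2 * (2 + a + 1 / a) * L + (1 + a) * eps" .
  have "(norm ((X *v bh - \<mu>) - (X *v bb - \<mu>)))\<^sup>2 \<le> 10 * (norm (X *v bb - \<mu>))\<^sup>2 + 2.5 * lam * cb
      + (37 * \<sigma>\<^sup>2 - 2.5 * lam) * ch + 29 * \<sigma>\<^sup>2 * L + 2.5 * eps"
    by (rule parameter_error_bound[OF _ \<open>L \<ge> 0\<close>]) (use excess[of 1] in simp)
  then show "(norm (X *v (bh - bb)))\<^sup>2 \<le> 10 * (norm (X *v bb - \<mu>))\<^sup>2 + 2.5 * lam * cb
      + (37 * \<sigma>\<^sup>2 - 2.5 * lam) * ch + 29 * \<sigma>\<^sup>2 * L + 2.5 * eps"
    by (simp add: matrix_vector_mult_diff_distrib)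
qed

lemma oracle_inequalities:
  fixes X :: "real^'p^'n" and cl :: "'p set \<Rightarrow> ereal" and y \<mu> :: "real^'n" and bb bh :: "real^'p"
  assumes cl: "coding_length cl" and "\<sigma> \<ge> 0" "lam \<ge> 0" "L \<ge> 0"
    and noise: "noise_controlled X cl \<sigma> L bb \<mu> y"
    and opt: "ereal ((norm (X *v bh - y))\<^sup>2) + ereal lam * cc cl bh
      \<le> ereal ((norm (X *v bb - y))\<^sup>2) + ereal lam * cc cl bb + ereal eps"
  shows "(\<forall>a > 0. ereal ((norm (X *v bh - \<mu>))\<^sup>2)
      \<le> ereal ((1 + a) * ((norm (X *v bb - \<mu>))\<^sup>2 + 2 * \<sigma> * sqrt (2 * L) * norm (X *v bb - \<mu>)))
         + ereal ((1 + a) * lam) * cc cl bb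
         + ereal (7.4 * (2 + a + 1 / a) * \<sigma>\<^sup>2 - (1 + a) * lam) * cc cl bh
         + ereal (4.7 * \<sigma>\<^sup>2 * (2 + a + 1 / a) * L) + ereal ((1 + a) * eps)) \<and>
    (subadditive_cc cl \<longrightarrow>
      ereal (real CARD('n)) * rho_minus X cl (cc cl bh + cc cl bb) * ereal ((norm (bh - bb))\<^sup>2)
      \<le> ereal (10 * (norm (X *v bb - \<mu>))\<^sup>2) + ereal (2.5 * lam) * cc cl bb
         + ereal (37 * \<sigma>\<^sup>2 - 2.5 * lam) * cc cl bh + ereal (29 * \<sigma>\<^sup>2 * L) + ereal (2.5 * eps))"
    (is "?excess \<and> (_ \<longrightarrow> _ \<le> ?difference_bound)")
proof -
  have "cc cl bb \<ge> 0" "cc cl bh \<ge> 0" using cc_nonneg[OF cl] by auto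
  have "cc cl bh \<noteq> \<infinity>" if "lam > 0" "cc cl bb \<noteq> \<infinity>"
    using opt that \<open>cc cl bb \<ge> 0\<close> by (cases "cc cl bb") auto
  then consider (infinite) "lam > 0 \<and> cc cl bb = \<infinity> \<or> \<sigma> > 0 \<and> lam = 0 \<and> cc cl bh = \<infinity>"
    | (finite) "lam = 0 \<or> cc cl bb \<noteq> \<infinity>" "cc cl bh \<noteq> \<infinity> \<or> \<sigma> = 0 \<and> lam = 0"
    using \<open>\<sigma> \<ge> 0\<close> \<open>lam \<ge> 0\<close> by fastforce
  then have "?excess \<and> ereal ((norm (X *v (bh - bb)))\<^sup>2) \<le> ?difference_bound"
  proof cases
    case infinite
    have excess_infinite: "ereal (7.4 * (2 + a + 1 / a) * \<sigma>\<^sup>2 - (1 + a) * lam) * cc cl bh = \<infinity>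
        \<or> ereal ((1 + a) * lam) * cc cl bb = \<infinity>" if "a > 0" for a
      using infinite that by (auto simp: add_pos_pos)
    have difference_infinite:
      "ereal (37 * \<sigma>\<^sup>2 - 2.5 * lam) * cc cl bh = \<infinity> \<or> ereal (2.5 * lam) * cc cl bb = \<infinity>"
      using infinite by auto
    have ?excess by (intro allI impI, drule excess_infinite, elim disjE; simp only:; simp)
    moreover have "ereal ((norm (X *v (bh - bb)))\<^sup>2) \<le> ?difference_bound"
      by (rule disjE[OF difference_infinite]; simp only:; simp)
    ultimately show ?thesis ..
  next
    case finite
    define ch where "ch = real_of_ereal (cc cl bh)"
    define cb where "cb = real_of_ereal (cc cl bb)"
    have cb_eq: "ereal (k * lam) * cc cl bb = ereal (k * lam * cb)" for k
      unfolding cb_def using finite(1) \<open>cc cl bb \<ge> 0\<close> by (intro ereal_mult_eq_real_of_ereal) auto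
    have ch_eq: "ereal (s * \<sigma>\<^sup>2 - t * lam) * cc cl bh = ereal ((s * \<sigma>\<^sup>2 - t * lam) * ch)" for s t
      unfolding ch_def using finite(2) \<open>cc cl bh \<ge> 0\<close> by (intro ereal_mult_eq_real_of_ereal) auto
    have "ereal lam * cc cl bh = ereal (lam * ch)"
      unfolding ch_def using finite \<open>cc cl bh \<ge> 0\<close> by (intro ereal_mult_eq_real_of_ereal) auto
    then have "(norm (X *v bh - y))\<^sup>2 + lam * ch \<le> (norm (X *v bb - y))\<^sup>2 + lam * cb + eps"
      using opt cb_eq[of 1] by simp
    note bounds = oracle_bounds_real[OF noise cl \<open>L \<ge> 0\<close> _ ch_def this]
    show ?thesis unfolding cb_eq ch_eq using bounds finite(2) by simp
  qed
  then show ?thesis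
    using order_trans[OF rho_minus_cc_add_mult_norm_le[of cl X bh bb]] by blast
qed

theorem lemma7:
  fixes M :: "'a measure" and Y :: "'a \<Rightarrow> real^'n"
    and X :: "real^'p^'n" and cl :: "'p set \<Rightarrow> ereal"
    and \<sigma> \<eta> :: real and bb :: "real^'p"
  assumes "prob_space M"
    and indep: "prob_space.indep_vars M (\<lambda>_. borel) (\<lambda>i \<omega>. Y \<omega> $ i) UNIV"
    and integ: "\<And>i. integrable M (\<lambda>\<omega>. Y \<omega> $ i)"
    and \<sigma>_nonneg: "\<sigma> \<ge> 0"
    and mgf_integ: "\<And>i t. integrable M
          (\<lambda>\<omega>. exp (t * (Y \<omega> $ i - prob_space.expectation M (\<lambda>\<omega>. Y \<omega> $ i))))"
    and subgauss: "\<And>i t. prob_space.expectation M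
          (\<lambda>\<omega>. exp (t * (Y \<omega> $ i - prob_space.expectation M (\<lambda>\<omega>. Y \<omega> $ i))))
          \<le> exp (\<sigma>\<^sup>2 * t\<^sup>2 / 2)"
    and cl: "coding_length cl"
    and \<eta>: "0 < \<eta>" "\<eta> < 1"
  shows "\<exists>A \<in> sets M. measure M A > 1 - \<eta> \<and>
    (\<forall>\<omega> \<in> A. \<forall>lam \<ge> 0. \<forall>eps \<ge> 0. \<forall>bh :: real^'p.
       (let EY = (\<chi> i. prob_space.expectation M (\<lambda>\<omega>. Y \<omega> $ i));
            Qhat = (\<lambda>\<beta>. (norm (X *v \<beta> - Y \<omega>))\<^sup>2);
            D = norm (X *v bb - EY);
            L = ln (6 / \<eta>)
        in ereal (Qhat bh) + ereal lam * cc cl bh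
             \<le> ereal (Qhat bb) + ereal lam * cc cl bb + ereal eps \<longrightarrow>
           (\<forall>a > 0.
              ereal ((norm (X *v bh - EY))\<^sup>2)
              \<le> ereal ((1 + a) * (D\<^sup>2 + 2 * \<sigma> * sqrt (2 * L) * D))
                 + ereal ((1 + a) * lam) * cc cl bb
                 + ereal (7.4 * (2 + a + 1 / a) * \<sigma>\<^sup>2 - (1 + a) * lam) * cc cl bh
                 + ereal (4.7 * \<sigma>\<^sup>2 * (2 + a + 1 / a) * L)
                 + ereal ((1 + a) * eps)) \<and>
           (subadditive_cc cl \<longrightarrow>
              ereal (real CARD('n)) * rho_minus X cl (cc cl bh + cc cl bb)
                 * ereal ((norm (bh - bb))\<^sup>2)
              \<le> ereal (10 * D\<^sup>2) + ereal (2.5 * lam) * cc cl bb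
                 + ereal (37 * \<sigma>\<^sup>2 - 2.5 * lam) * cc cl bh
                 + ereal (29 * \<sigma>\<^sup>2 * L) + ereal (2.5 * eps))))"
proof -
  define EY where "EY = (\<chi> i. prob_space.expectation M (\<lambda>\<omega>. Y \<omega> $ i))"
  define L where "L = ln (6 / \<eta>)"
  have "L \<ge> 0" using \<eta> by (simp add: L_def)
  obtain A where A: "A \<in> sets M" "measure M A > 1 - \<eta>"
    and noise: "\<And>\<omega>. \<omega> \<in> A \<Longrightarrow> noise_controlled X cl \<sigma> L bb EY (Y \<omega>)"
    using noise_controlled_with_high_probability[OF assms(1) indep integ \<sigma>_nonneg mgf_integ subgauss cl \<eta>,
        of X bb, folded EY_def L_def] by blast
  show ?thesis
    unfolding Let_def EY_def[symmetric] L_def[symmetric]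
    using A oracle_inequalities[OF cl \<sigma>_nonneg _ \<open>L \<ge> 0\<close> noise] by blast
qed
end
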